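(* Let $\kappa\ge2$ be a real number. Then $\lim_{\zeta\to0^+}\Upsilon_{\kappa,\zeta}=0$.
   Context: For real $\kappa\ge2$, $\mathcal{P}_\kappa$ is the set of all irreducible monic polynomials $p\in\mathbb{Z}[x]$ all of whose roots lie in $[-\kappa,\kappa]$. For real $\zeta>0$, $\mathbf{I}_{\kappa,\zeta}$ is the set of all closed intervals of length $\zeta$ contained in $[-\kappa,\kappa]$. For $p\in\mathcal{P}_\kappa$ and $I\in\mathbf{I}_{\kappa,\zeta}$ put $\Upsilon_\kappa(p,I)=\big(|\{\theta\in I:p(\theta)=0\}|-1\big)/\deg p$, and $\Upsilon_{\kappa,\zeta}=\sup\{\Upsilon_\kappa(p,I):p\in\mathcal{P}_\kappa,\ I\in\mathbf{I}_{\kappa,\zeta}\}$. *)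

theory Defs
  imports "HOL-Analysis.Analysis" "HOL-Computational_Algebra.Polynomial_Factorial"
begin

definition P_set :: "real \<Rightarrow> int poly set" where
  "P_set \<kappa> = {p. irreducible p \<and> lead_coeff p = 1 \<and>
     (\<forall>z::complex. poly (map_poly of_int p) z = 0 \<longrightarrow> z \<in> \<real> \<and> \<bar>Re z\<bar> \<le> \<kappa>)}"

definition I_set :: "real \<Rightarrow> real \<Rightarrow> real set set" where
  "I_set \<kappa> \<zeta> = {{a..a + \<zeta>} | a. {a..a + \<zeta>} \<subseteq> {-\<kappa>..\<kappa>}}"

definition Upsilon_pI :: "int poly \<Rightarrow> real set \<Rightarrow> real" where
  "Upsilon_pI p I =
     (real (card {\<theta>::real. \<theta> \<in> I \<and> poly (map_poly of_int p) \<theta> = 0}) - 1) / real (degree p)"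

definition Upsilon :: "real \<Rightarrow> real \<Rightarrow> real" where
  "Upsilon \<kappa> \<zeta> = Sup {Upsilon_pI p I | p I. p \<in> P_set \<kappa> \<and> I \<in> I_set \<kappa> \<zeta>}"

end

theory Submission
  imports Defs "Berlekamp_Zassenhaus.Factorize_Int_Poly" "HOL-Real_Asymp.Real_Asymp"
begin

text \<open>The roots of an irreducible monic integer polynomial p of degree n are distinct and their
  discriminant, the product of all differences x - y of distinct roots, is a nonzero integer:
  it equals the product of p' over the roots, which is the determinant of the integer matrix
  p'(C) for the companion matrix C of p. Hence the product of the n(n - 1) distances is at least 1.
  If m of the roots, all of which lie in [-\<kappa>, \<kappa>], fall into an interval of length \<zeta>, then m(m - 1)
  of these distances are at most \<zeta> and the others at most 2\<kappa>, so
  1 \<le> \<zeta>^(m(m - 1)) (2\<kappa>)^(n^2) and therefore (m - 1)/n \<le> sqrt (ln (2\<kappa>) / ln (1/\<zeta>)),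
  a bound that is uniform in p and tends to 0 with \<zeta>.\<close>

unbundle no vec_syntax

section \<open>Polynomials evaluated at companion matrices\<close>

definition vandermonde_mat :: "'a::comm_ring_1 list \<Rightarrow> 'a mat" where
  "vandermonde_mat as = mat (length as) (length as) (\<lambda>(j, k). (as ! j) ^ k)"

text \<open>This is the transpose of the usual companion matrix, so that for a root a of p the
  Vandermonde row (1, a, ..., a^(n-1)) is a left eigenvector with eigenvalue a.\<close>

definition companion_mat :: "'a::comm_ring_1 poly \<Rightarrow> 'a mat" where
  "companion_mat p = mat (degree p) (degree p)
     (\<lambda>(i, k). if Suc k < degree p then (if i = Suc k then 1 else 0) else - coeff p i)"

definition poly_mat :: "'a::comm_ring_1 poly \<Rightarrow> 'a mat \<Rightarrow> 'a mat" where
  "poly_mat q A = fold_coeffs (\<lambda>c M. c \<cdot>\<^sub>m 1\<^sub>m (dim_row A) + A * M) q (0\<^sub>m (dim_row A) (dim_row A))"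

lemma vandermonde_mat_carrier [simp]: "vandermonde_mat as \<in> carrier_mat (length as) (length as)"
  by (simp add: vandermonde_mat_def)

lemma companion_mat_carrier [simp]: "companion_mat p \<in> carrier_mat (degree p) (degree p)"
  by (simp add: companion_mat_def)

lemma poly_mat_0 [simp]: "poly_mat 0 A = 0\<^sub>m (dim_row A) (dim_row A)"
  by (simp add: poly_mat_def)

lemma poly_mat_pCons:
  assumes A: "A \<in> carrier_mat n n"
  shows "poly_mat (pCons c q) A = c \<cdot>\<^sub>m 1\<^sub>m n + A * poly_mat q A"
proof (cases "c = 0 \<and> q = 0")
  case True
  then show ?thesis using A by (intro eq_matI) (auto simp: poly_mat_def)
next
  case False
  then show ?thesis using A by (auto simp: poly_mat_def)
qed

lemma poly_mat_carrier [simp]: "A \<in> carrier_mat n n \<Longrightarrow> poly_mat q A \<in> carrier_mat n n"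
  by (induction q) (auto simp: poly_mat_pCons)

lemma det_vandermonde_mat_nonzero:
  fixes as :: "'a::field list"
  assumes "distinct as"
  shows "det (vandermonde_mat as) \<noteq> 0"
proof
  define n where "n = length as"
  assume "det (vandermonde_mat as) = 0"
  then obtain v where v: "v \<in> carrier_vec n" "v \<noteq> 0\<^sub>v n" "vandermonde_mat as *\<^sub>v v = 0\<^sub>v n"
    using det_0_iff_vec_prod_zero_field[OF vandermonde_mat_carrier] unfolding n_def by blast
  define r where "r = (\<Sum>k<n. monom (v $ k) k)"
  have coeff_r: "coeff r k = v $ k" if "k < n" for k
    using that by (simp add: r_def coeff_sum)
  have "r \<noteq> 0"
  proof
    assume "r = 0"
    then have "v = 0\<^sub>v n" using v(1) coeff_r by (intro eq_vecI) auto
    with v(2) show False by simp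
  qed
  have "degree r < n"
  proof -
    have "n > 0" using v(1,2) by (cases n) auto
    moreover have "degree r \<le> n - 1" unfolding r_def
      by (rule degree_sum_le) (auto intro: order.trans[OF degree_monom_le])
    ultimately show ?thesis by simp
  qed
  moreover have "set as \<subseteq> {x. poly r x = 0}"
  proof
    fix x assume "x \<in> set as"
    then obtain j where j: "j < n" "x = as ! j" by (auto simp: n_def in_set_conv_nth)
    have "0 = (vandermonde_mat as *\<^sub>v v) $ j" using v(3) j by simp
    also have "\<dots> = poly r x"
      using j v(1) by (simp add: vandermonde_mat_def n_def r_def scalar_prod_def poly_sum poly_monom
          lessThan_atLeast0 mult.commute)
    finally show "x \<in> {x. poly r x = 0}" by simp
  qed
  then have "card (set as) \<le> card {x. poly r x = 0}"
    by (rule card_mono[OF poly_roots_finite[OF \<open>r \<noteq> 0\<close>]])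
  then have "n \<le> card {x. poly r x = 0}"
    using assms by (simp add: n_def distinct_card)
  also have "\<dots> \<le> degree r" by (rule card_poly_roots_bound[OF \<open>r \<noteq> 0\<close>])
  finally show False using \<open>degree r < n\<close> by simp
qed

lemma mult_poly_mat_eq_mat_diag:
  assumes A: "A \<in> carrier_mat n n" and V: "V \<in> carrier_mat n n"
    and eigen: "V * A = mat_diag n f * V"
  shows "V * poly_mat q A = mat_diag n (\<lambda>j. poly q (f j)) * V"
proof (induction q)
  case 0
  show ?case using A V by (intro eq_matI) (auto simp: mat_diag_mult_left[OF V] scalar_prod_def)
next
  case (pCons c q)
  have M: "poly_mat q A \<in> carrier_mat n n" using A by simp
  have "V * poly_mat (pCons c q) A = V * (c \<cdot>\<^sub>m 1\<^sub>m n) + V * (A * poly_mat q A)"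
    unfolding poly_mat_pCons[OF A] by (rule mult_add_distrib_mat[OF V]) (use A M in auto)
  also have "\<dots> = c \<cdot>\<^sub>m V + (V * A) * poly_mat q A"
    using A V M by (simp add: mult_smult_distrib[OF V one_carrier_mat] assoc_mult_mat[of _ n n _ n _ n])
  also have "(V * A) * poly_mat q A = mat_diag n f * (V * poly_mat q A)"
    unfolding eigen using V M by (simp add: assoc_mult_mat[of _ n n _ n _ n])
  also have "\<dots> = mat_diag n (\<lambda>j. f j * poly q (f j)) * V"
    unfolding pCons.IH using V by (simp flip: assoc_mult_mat[of _ n n _ n _ n])
  also have "c \<cdot>\<^sub>m V + mat_diag n (\<lambda>j. f j * poly q (f j)) * V
      = mat_diag n (\<lambda>j. poly (pCons c q) (f j)) * V"
    using V by (intro eq_matI) (auto simp: mat_diag_mult_left[OF V] algebra_simps)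
  finally show ?case .
qed

lemma monic_root_power_degree:
  fixes p :: "'a::comm_ring_1 poly"
  assumes "lead_coeff p = 1" and "poly p a = 0"
  shows "a ^ degree p = - (\<Sum>l<degree p. coeff p l * a ^ l)"
proof -
  have "0 = (\<Sum>l<degree p. coeff p l * a ^ l) + a ^ degree p"
    using assms by (simp add: poly_altdef lessThan_Suc_atMost[symmetric])
  then show ?thesis by (simp add: eq_neg_iff_add_eq_0 add.commute)
qed

lemma vandermonde_mat_mult_companion_mat:
  fixes p :: "'a::comm_ring_1 poly"
  assumes monic: "lead_coeff p = 1" and len: "length as = degree p"
    and roots: "\<forall>a\<in>set as. poly p a = 0"
  shows "vandermonde_mat as * companion_mat p = mat_diag (degree p) (\<lambda>j. as ! j) * vandermonde_mat as"
proof (rule eq_matI)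
  define n where "n = degree p"
  have V: "vandermonde_mat as \<in> carrier_mat n n"
    using vandermonde_mat_carrier[of as] unfolding len n_def .
  fix j k assume "j < dim_row (mat_diag (degree p) (\<lambda>j. as ! j) * vandermonde_mat as)"
    and "k < dim_col (mat_diag (degree p) (\<lambda>j. as ! j) * vandermonde_mat as)"
  then have j: "j < n" and k: "k < n" using len by (auto simp: n_def vandermonde_mat_def mat_diag_def)
  define a where "a = as ! j"
  have "poly p a = 0" using roots j len by (simp add: a_def n_def)
  have lhs: "(vandermonde_mat as * companion_mat p) $$ (j, k) = (\<Sum>l<n. a ^ l * companion_mat p $$ (l, k))"
    using j k len
    by (simp add: n_def a_def vandermonde_mat_def scalar_prod_def lessThan_atLeast0
        carrier_matD[OF companion_mat_carrier])
  have "(\<Sum>l<n. a ^ l * companion_mat p $$ (l, k)) = a * a ^ k"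
  proof (cases "Suc k < n")
    case True
    then have "(\<Sum>l<n. a ^ l * companion_mat p $$ (l, k)) = (\<Sum>l<n. if l = Suc k then a ^ l else 0)"
      by (intro sum.cong) (auto simp: companion_mat_def n_def)
    then show ?thesis using True by simp
  next
    case False
    with k have "Suc k = n" by simp
    have "(\<Sum>l<n. a ^ l * companion_mat p $$ (l, k)) = - (\<Sum>l<n. coeff p l * a ^ l)"
      using False k by (auto simp: companion_mat_def n_def sum_negf[symmetric] mult.commute intro!: sum.cong)
    also have "\<dots> = a ^ n"
      unfolding n_def by (rule monic_root_power_degree[OF monic \<open>poly p a = 0\<close>, symmetric])
    finally show ?thesis using \<open>Suc k = n\<close> by (metis power_Suc)
  qed
  moreover have "(mat_diag n (\<lambda>j. as ! j) * vandermonde_mat as) $$ (j, k) = a * a ^ k"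
    unfolding mat_diag_mult_left[OF V] using j k len by (simp add: a_def n_def vandermonde_mat_def)
  ultimately show "(vandermonde_mat as * companion_mat p) $$ (j, k)
      = (mat_diag (degree p) (\<lambda>j. as ! j) * vandermonde_mat as) $$ (j, k)"
    using lhs by (simp add: n_def)
qed (use len in \<open>auto simp: vandermonde_mat_def mat_diag_def companion_mat_def\<close>)

lemma det_mat_diag: "det (mat_diag n f) = (\<Prod>j<n. f j)"
  by (subst det_upper_triangular[of _ n])
    (auto simp: mat_diag_def prod_list_diag_prod lessThan_atLeast0)

lemma det_poly_companion_mat:
  fixes p q :: "'a::field poly"
  assumes "lead_coeff p = 1" and len: "length as = degree p" and dist: "distinct as"
    and "\<forall>a\<in>set as. poly p a = 0"
  shows "det (poly_mat q (companion_mat p)) = (\<Prod>a\<in>set as. poly q a)"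
proof -
  define n where "n = degree p"
  define V where "V = vandermonde_mat as"
  have V: "V \<in> carrier_mat n n" and C: "companion_mat p \<in> carrier_mat n n"
    using vandermonde_mat_carrier[of as] unfolding V_def len n_def by simp_all
  have "V * poly_mat q (companion_mat p) = mat_diag n (\<lambda>j. poly q (as ! j)) * V"
    by (rule mult_poly_mat_eq_mat_diag[OF C V])
      (use vandermonde_mat_mult_companion_mat[OF assms(1,2,4)] in \<open>simp add: V_def n_def\<close>)
  then have "det V * det (poly_mat q (companion_mat p)) = (\<Prod>j<n. poly q (as ! j)) * det V"
    using V C by (metis det_mult det_mat_diag mat_diag_dim poly_mat_carrier)
  moreover have "det V \<noteq> 0" unfolding V_def by (rule det_vandermonde_mat_nonzero[OF dist])
  moreover have "(\<Prod>j<n. poly q (as ! j)) = (\<Prod>a\<in>set as. poly q a)"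
    using len dist unfolding n_def
    by (intro prod.reindex_bij_betw[OF bij_betw_nth[OF dist]]) (auto simp: lessThan_atLeast0)
  ultimately show ?thesis by simp
qed

lemma (in comm_ring_hom) map_mat_poly_mat:
  assumes A: "A \<in> carrier_mat n n"
  shows "map_mat hom (poly_mat q A) = poly_mat (map_poly hom q) (map_mat hom A)"
proof (induction q)
  case 0
  show ?case by (intro eq_matI) auto
next
  case (pCons c q)
  have "map_mat hom (c \<cdot>\<^sub>m 1\<^sub>m n + A * poly_mat q A)
      = hom c \<cdot>\<^sub>m 1\<^sub>m n + map_mat hom A * map_mat hom (poly_mat q A)"
    using A by (subst mat_hom_mult[OF A poly_mat_carrier[OF A], symmetric])
      (intro eq_matI; auto simp: hom_add hom_mult carrier_matD[OF A] carrier_matD[OF poly_mat_carrier[OF A]])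
  then show ?case
    using A by (simp add: poly_mat_pCons map_poly_pCons_hom pCons.IH)
qed

lemma (in inj_comm_ring_hom) map_mat_companion_mat:
  "map_mat hom (companion_mat p) = companion_mat (map_poly hom p)"
  by (intro eq_matI) (auto simp: companion_mat_def hom_uminus)

lemma prod_poly_at_roots_Ints:
  fixes p q :: "int poly" and as :: "'a::field_char_0 list"
  assumes "lead_coeff p = 1" and "length as = degree p" and "distinct as"
    and "\<forall>a\<in>set as. poly (map_poly of_int p) a = 0"
  shows "(\<Prod>a\<in>set as. poly (map_poly of_int q) a) \<in> \<int>"
proof -
  have "(\<Prod>a\<in>set as. poly (map_poly of_int q) a)
      = det (poly_mat (map_poly of_int q) (companion_mat (map_poly of_int p)))"
    by (rule det_poly_companion_mat[symmetric]) (use assms in simp_all)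
  also have "\<dots> = of_int (det (poly_mat q (companion_mat p)))"
    by (simp add: of_int_hom.map_mat_companion_mat[symmetric]
        of_int_hom.map_mat_poly_mat[OF companion_mat_carrier, symmetric])
  finally show ?thesis by simp
qed

section \<open>The discriminant of an irreducible monic integer polynomial\<close>

lemma poly_pderiv_prod_linear_factors:
  fixes S :: "'a::idom set"
  assumes "finite S" and "b \<in> S"
  shows "poly (pderiv (\<Prod>a\<in>S. [:- a, 1:])) b = (\<Prod>c\<in>S - {b}. b - c)"
proof -
  have "poly (pderiv (\<Prod>a\<in>S. [:- a, 1:])) b = (\<Sum>a\<in>S. poly (\<Prod>c\<in>S - {a}. [:- c, 1:]) b)"
    by (simp add: pderiv_prod poly_sum pderiv_pCons)
  also have "\<dots> = (\<Sum>a\<in>S. if a = b then (\<Prod>c\<in>S - {b}. b - c) else 0)"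
    using assms by (intro sum.cong) (auto simp: poly_prod)
  also have "\<dots> = (\<Prod>c\<in>S - {b}. b - c)"
    using assms by simp
  finally show ?thesis .
qed

lemma irreducible_monic_int_poly_splits_distinct:
  fixes p :: "int poly"
  assumes irr: "irreducible p" and monic: "lead_coeff p = 1"
  obtains as :: "complex list"
  where "distinct as" "length as = degree p" "map_poly of_int p = (\<Prod>a\<leftarrow>as. [:- a, 1:])"
proof -
  define pc :: "complex poly" where "pc = map_poly of_int p"
  have "pc = map_poly of_rat (map_poly (of_int :: int \<Rightarrow> rat) p)"
    by (simp add: pc_def map_poly_map_poly o_def)
  moreover have "square_free (map_poly (of_int :: int \<Rightarrow> rat) p)"
    by (rule square_free_int_rat[OF irreducible_imp_square_free[OF irr]])
  ultimately have "square_free pc"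
    using field_hom_0'.square_free_map_poly[of "of_rat :: rat \<Rightarrow> complex"]
    by (simp add: field_hom_0'_def of_rat_hom.field_hom_axioms)
  then have rsf: "rsquarefree pc" by (rule square_free_rsquarefree)
  have deg: "degree pc = degree p" and "lead_coeff pc = 1"
    using monic by (simp_all add: pc_def)
  then obtain as where split: "pc = (\<Prod>a\<leftarrow>as. [:- a, 1:])" and len: "length as = degree p"
    using fundamental_theorem_algebra_factorized[of pc] by auto
  have "pc \<noteq> 0" using \<open>lead_coeff pc = 1\<close> by auto
  moreover have "{x. poly pc x = 0} = set as"
    unfolding split poly_prod_list prod_list_zero_iff by auto
  ultimately have "card (set as) = length as"
    using rsf rsquarefree_card_degree deg len by simp
  then show thesis using that card_distinct len split unfolding pc_def by blast
qed

lemma irreducible_monic_int_poly_discriminant: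
  fixes p :: "int poly"
  assumes "irreducible p" and "lead_coeff p = 1"
  defines "S \<equiv> {z::complex. poly (map_poly of_int p) z = 0}"
  shows "finite S" and "card S = degree p" and "1 \<le> norm (\<Prod>z\<in>S. \<Prod>w\<in>S - {z}. z - w)"
proof -
  obtain as :: "complex list" where dist: "distinct as" and len: "length as = degree p"
    and split: "map_poly of_int p = (\<Prod>a\<leftarrow>as. [:- a, 1:])"
    using irreducible_monic_int_poly_splits_distinct assms(1,2) by blast
  have S: "S = set as"
    unfolding S_def split poly_prod_list prod_list_zero_iff by auto
  then show "finite S" and "card S = degree p"
    using dist len by (simp_all add: distinct_card)
  have split_S: "map_poly of_int p = (\<Prod>a\<in>S. [:- a, 1:])"
    unfolding split S by (simp add: prod.distinct_set_conv_list[OF dist])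
  have "(\<Prod>a\<in>S. poly (map_poly of_int (pderiv p)) a) \<in> \<int>"
    unfolding S by (rule prod_poly_at_roots_Ints[OF assms(2) len dist]) (simp add: S[symmetric] S_def)
  moreover have "(\<Prod>a\<in>S. poly (map_poly of_int (pderiv p)) a) = (\<Prod>z\<in>S. \<Prod>w\<in>S - {z}. z - w)"
    using poly_pderiv_prod_linear_factors[OF \<open>finite S\<close>]
    by (intro prod.cong) (simp_all add: of_int_hom.map_poly_pderiv split_S)
  moreover have "(\<Prod>z\<in>S. \<Prod>w\<in>S - {z}. z - w) \<noteq> 0"
    using \<open>finite S\<close> by simp
  ultimately obtain k :: int where "k \<noteq> 0" "(\<Prod>z\<in>S. \<Prod>w\<in>S - {z}. z - w) = of_int k"
    by (metis Ints_cases of_int_0)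
  then show "1 \<le> norm (\<Prod>z\<in>S. \<Prod>w\<in>S - {z}. z - w)"
    by simp
qed

lemma prod_pairwise_diff_of_real:
  fixes R :: "real set"
  shows "(\<Prod>z\<in>of_real ` R. \<Prod>w\<in>of_real ` R - {z}. z - w)
    = (of_real (\<Prod>x\<in>R. \<Prod>y\<in>R - {x}. x - y) :: 'a::{real_normed_algebra_1, comm_ring_1})"
proof -
  have inj: "inj_on (of_real :: real \<Rightarrow> 'a) A" for A
    by (auto intro: inj_onI)
  have "of_real ` R - {of_real x} = (of_real ` (R - {x}) :: 'a set)" for x
    by auto
  then show ?thesis
    by (simp add: prod.reindex[OF inj] o_def)
qed

lemma P_set_real_roots:
  fixes p :: "int poly" and \<kappa> :: real
  assumes "p \<in> P_set \<kappa>"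
  defines "R \<equiv> {\<theta>::real. poly (map_poly of_int p) \<theta> = 0}"
  shows "finite R" and "card R = degree p" and "R \<subseteq> {-\<kappa>..\<kappa>}"
    and "1 \<le> (\<Prod>x\<in>R. \<Prod>y\<in>R - {x}. \<bar>x - y\<bar>)"
proof -
  have irr: "irreducible p" and monic: "lead_coeff p = 1"
    and roots: "\<And>z::complex. poly (map_poly of_int p) z = 0 \<Longrightarrow> z \<in> \<real> \<and> \<bar>Re z\<bar> \<le> \<kappa>"
    using assms(1) by (auto simp: P_set_def)
  define S where "S = {z::complex. poly (map_poly of_int p) z = 0}"
  have poly_of_real: "poly (map_poly of_int p) (of_real x :: complex) = of_real (poly (map_poly of_int p) x)"
    for x :: real
  proof -
    have "map_poly (of_int :: int \<Rightarrow> complex) p = map_poly of_real (map_poly of_int p)"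
      by (simp add: map_poly_map_poly o_def)
    then show ?thesis by simp
  qed
  have S: "S = of_real ` R"
  proof
    show "S \<subseteq> of_real ` R"
    proof
      fix z assume "z \<in> S"
      then obtain x where "z = of_real x" using roots unfolding S_def by (auto elim: Reals_cases)
      then show "z \<in> of_real ` R" using \<open>z \<in> S\<close> poly_of_real[of x] by (auto simp: S_def R_def)
    qed
  qed (auto simp: S_def R_def poly_of_real)
  have inj: "inj_on (of_real :: real \<Rightarrow> complex) R" by (auto intro: inj_onI)
  show "finite R" and "card R = degree p"
    using irreducible_monic_int_poly_discriminant(1,2)[OF irr monic] card_image[OF inj]
      finite_image_iff[OF inj]
    by (simp_all flip: S_def add: S)
  show "R \<subseteq> {-\<kappa>..\<kappa>}"
  proof
    fix x assume "x \<in> R"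
    then have "\<bar>Re (of_real x :: complex)\<bar> \<le> \<kappa>"
      using roots[of "of_real x"] poly_of_real[of x] by (simp add: R_def)
    then show "x \<in> {-\<kappa>..\<kappa>}" by auto
  qed
  have "1 \<le> norm (\<Prod>z\<in>S. \<Prod>w\<in>S - {z}. z - w)"
    using irreducible_monic_int_poly_discriminant(3)[OF irr monic] by (simp flip: S_def)
  then show "1 \<le> (\<Prod>x\<in>R. \<Prod>y\<in>R - {x}. \<bar>x - y\<bar>)"
    unfolding S prod_pairwise_diff_of_real norm_of_real by (simp add: abs_prod)
qed

section \<open>Clusters of roots\<close>

lemma cluster_power_bound:
  fixes R :: "real set" and D \<zeta> a :: real
  assumes finR: "finite R" and cardR: "card R = n"
    and diam: "\<forall>x\<in>R. \<forall>y\<in>R. \<bar>x - y\<bar> \<le> D" and "1 \<le> D"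
    and disc: "1 \<le> (\<Prod>x\<in>R. \<Prod>y\<in>R - {x}. \<bar>x - y\<bar>)" and "0 \<le> \<zeta>"
  defines "T \<equiv> R \<inter> {a..a + \<zeta>}"
  shows "1 \<le> \<zeta> ^ ((card T - 1) * card T) * D ^ (n * n)"
proof -
  define m where "m = card T"
  have "T \<subseteq> R" by (simp add: T_def)
  then have finT: "finite T" using finR by (rule finite_subset)
  have far: "(\<Prod>y\<in>A. \<bar>x - y\<bar>) \<le> D ^ n" if "A \<subseteq> R" "x \<in> R" for A x
  proof -
    have "(\<Prod>y\<in>A. \<bar>x - y\<bar>) \<le> D ^ card A"
      using prod_mono[of A "\<lambda>y. \<bar>x - y\<bar>" "\<lambda>_. D"] diam that by auto
    also have "\<dots> \<le> D ^ n"
      using power_increasing[OF card_mono[OF finR \<open>A \<subseteq> R\<close>] \<open>1 \<le> D\<close>] cardR by simp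
    finally show ?thesis .
  qed
  have row: "(\<Prod>y\<in>R - {x}. \<bar>x - y\<bar>) \<le> (if x \<in> T then \<zeta> ^ (m - 1) else 1) * D ^ n"
    if "x \<in> R" for x
  proof (cases "x \<in> T")
    case True
    have "(\<Prod>y\<in>R - {x}. \<bar>x - y\<bar>) = (\<Prod>y\<in>T - {x}. \<bar>x - y\<bar>) * (\<Prod>y\<in>R - T. \<bar>x - y\<bar>)"
      using True finR finT by (subst prod.union_disjoint[symmetric]) (auto intro!: prod.cong simp: T_def)
    also have "\<dots> \<le> \<zeta> ^ (m - 1) * D ^ n"
    proof (rule mult_mono)
      have "(\<Prod>y\<in>T - {x}. \<bar>x - y\<bar>) \<le> (\<Prod>y\<in>T - {x}. \<zeta>)"
        using True by (intro prod_mono) (auto simp: T_def)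
      then show "(\<Prod>y\<in>T - {x}. \<bar>x - y\<bar>) \<le> \<zeta> ^ (m - 1)"
        using True finT by (simp add: m_def)
    qed (use far that \<open>0 \<le> \<zeta>\<close> in \<open>auto intro: prod_nonneg\<close>)
    finally show ?thesis using True by simp
  qed (use far that in auto)
  have "(\<Prod>x\<in>R. \<Prod>y\<in>R - {x}. \<bar>x - y\<bar>) \<le> (\<Prod>x\<in>R. (if x \<in> T then \<zeta> ^ (m - 1) else 1) * D ^ n)"
    by (rule prod_mono) (use row in \<open>auto intro: prod_nonneg\<close>)
  with disc have "1 \<le> (\<Prod>x\<in>R. (if x \<in> T then \<zeta> ^ (m - 1) else 1) * D ^ n)"
    by linarith
  also have "\<dots> = (\<Prod>x\<in>R. if x \<in> T then \<zeta> ^ (m - 1) else 1) * D ^ (n * n)"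
    by (simp add: prod.distrib cardR power_mult)
  also have "(\<Prod>x\<in>R. if x \<in> T then \<zeta> ^ (m - 1) else 1) = \<zeta> ^ ((m - 1) * m)"
    using finR \<open>T \<subseteq> R\<close> by (simp add: prod.If_cases Int_absorb1 Int_absorb2 m_def power_mult)
  finally show ?thesis by (simp add: m_def)
qed

lemma cluster_ratio_le_sqrt_log:
  fixes \<zeta> K :: real and m n :: nat
  assumes "0 < \<zeta>" "\<zeta> < 1" and "1 \<le> K"
    and bound: "1 \<le> \<zeta> ^ ((m - 1) * m) * K ^ (n * n)"
  shows "(real m - 1) / real n \<le> sqrt (ln K / ln (1 / \<zeta>))"
proof (cases "m = 0 \<or> n = 0")
  case True
  then have "(real m - 1) / real n \<le> 0" by (auto simp: divide_nonpos_pos)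
  also have "0 \<le> sqrt (ln K / ln (1 / \<zeta>))" using assms by simp
  finally show ?thesis .
next
  case False
  have lz: "0 < ln (1 / \<zeta>)" using assms by simp
  have "0 \<le> ln (\<zeta> ^ ((m - 1) * m) * K ^ (n * n))"
    using bound by simp
  also have "\<dots> = real ((m - 1) * m) * ln \<zeta> + real (n * n) * ln K"
    using assms by (simp add: ln_mult ln_realpow)
  finally have key: "real ((m - 1) * m) * ln (1 / \<zeta>) \<le> real (n * n) * ln K"
    using assms by (simp add: ln_div)
  have "(real m - 1)\<^sup>2 * ln (1 / \<zeta>) \<le> real ((m - 1) * m) * ln (1 / \<zeta>)"
    using False lz by (intro mult_right_mono) (simp_all add: power2_eq_square mult_left_mono)
  also note key
  finally have "(real m - 1)\<^sup>2 * ln (1 / \<zeta>) \<le> real n * real n * ln K"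
    by simp
  then have "((real m - 1) / real n)\<^sup>2 \<le> ln K / ln (1 / \<zeta>)"
    using lz False
    by (simp add: power_divide divide_le_eq pos_le_divide_eq power2_eq_square mult.commute)
  then show ?thesis by (rule real_le_rsqrt)
qed

lemma Upsilon_pI_le_sqrt_log:
  fixes \<kappa> \<zeta> :: real
  assumes "1 \<le> 2 * \<kappa>" and "0 < \<zeta>" "\<zeta> < 1"
    and "p \<in> P_set \<kappa>" and "I \<in> I_set \<kappa> \<zeta>"
  shows "Upsilon_pI p I \<le> sqrt (ln (2 * \<kappa>) / ln (1 / \<zeta>))"
proof -
  obtain a where I: "I = {a..a + \<zeta>}" using \<open>I \<in> I_set \<kappa> \<zeta>\<close> by (auto simp: I_set_def)
  define R where "R = {\<theta>::real. poly (map_poly of_int p) \<theta> = 0}"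
  note roots = P_set_real_roots[OF \<open>p \<in> P_set \<kappa>\<close>, folded R_def]
  have diam: "\<forall>x\<in>R. \<forall>y\<in>R. \<bar>x - y\<bar> \<le> 2 * \<kappa>"
  proof (intro ballI)
    fix x y assume "x \<in> R" "y \<in> R"
    then have "x \<in> {-\<kappa>..\<kappa>}" "y \<in> {-\<kappa>..\<kappa>}" using roots(3) by auto
    then show "\<bar>x - y\<bar> \<le> 2 * \<kappa>" by auto
  qed
  have "1 \<le> \<zeta> ^ ((card (R \<inter> I) - 1) * card (R \<inter> I)) * (2 * \<kappa>) ^ (degree p * degree p)"
    unfolding I by (rule cluster_power_bound[OF roots(1,2) diam _ roots(4)]) (use assms in auto)
  then have "(real (card (R \<inter> I)) - 1) / real (degree p) \<le> sqrt (ln (2 * \<kappa>) / ln (1 / \<zeta>))"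
    using cluster_ratio_le_sqrt_log assms by blast
  moreover have "{\<theta>. \<theta> \<in> I \<and> poly (map_poly of_int p) \<theta> = 0} = R \<inter> I"
    by (auto simp: R_def)
  ultimately show ?thesis by (simp add: Upsilon_pI_def)
qed

lemma Upsilon_pI_X_eq_0:
  assumes "0 \<le> \<zeta>"
  shows "Upsilon_pI [:0, 1:] {0..0 + \<zeta>} = 0"
proof -
  have "{\<theta>::real. \<theta> \<in> {0..0 + \<zeta>} \<and> poly (map_poly of_int [:0, 1::int:]) \<theta> = 0} = {0}"
    using assms by auto
  then show ?thesis by (simp add: Upsilon_pI_def)
qed

lemma X_in_P_set: "0 \<le> \<kappa> \<Longrightarrow> [:0, 1:] \<in> P_set \<kappa>"
  using irreducible_linear_poly[of 1 0] by (auto simp: P_set_def)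

lemma Upsilon_bounds:
  fixes \<kappa> \<zeta> :: real
  assumes "1 \<le> \<kappa>" and "0 < \<zeta>" "\<zeta> < 1"
  shows "0 \<le> Upsilon \<kappa> \<zeta>" and "Upsilon \<kappa> \<zeta> \<le> sqrt (ln (2 * \<kappa>) / ln (1 / \<zeta>))"
proof -
  define S where "S = {Upsilon_pI p I | p I. p \<in> P_set \<kappa> \<and> I \<in> I_set \<kappa> \<zeta>}"
  have ub: "x \<le> sqrt (ln (2 * \<kappa>) / ln (1 / \<zeta>))" if "x \<in> S" for x
    using that Upsilon_pI_le_sqrt_log assms unfolding S_def by force
  have "{0..0 + \<zeta>} \<in> I_set \<kappa> \<zeta>"
    unfolding I_set_def using assms by (intro CollectI exI[of _ 0]) auto
  then have "0 \<in> S"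
    unfolding S_def using X_in_P_set Upsilon_pI_X_eq_0 assms
    by (intro CollectI exI[of _ "[:0, 1:]"] exI[of _ "{0..0 + \<zeta>}"]) auto
  moreover have "bdd_above S"
    using ub by (rule bdd_aboveI)
  ultimately show "0 \<le> Upsilon \<kappa> \<zeta>"
    unfolding Upsilon_def S_def[symmetric] by (rule cSup_upper)
  show "Upsilon \<kappa> \<zeta> \<le> sqrt (ln (2 * \<kappa>) / ln (1 / \<zeta>))"
    unfolding Upsilon_def S_def[symmetric] using \<open>0 \<in> S\<close> ub by (intro cSup_least) auto
qed

lemma tendsto_sqrt_div_ln_inverse_at_right_0:
  fixes L :: real
  assumes "0 < L"
  shows "((\<lambda>\<zeta>. sqrt (L / ln (1 / \<zeta>))) \<longlongrightarrow> 0) (at_right 0)"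
  using assms by real_asymp

theorem theorem5p4:
  fixes \<kappa> :: real
  assumes "\<kappa> \<ge> 2"
  shows "((\<lambda>\<zeta>. Upsilon \<kappa> \<zeta>) \<longlongrightarrow> 0) (at_right 0)"
proof (rule tendsto_sandwich)
  have "1 \<le> \<kappa>" using assms by simp
  have small: "eventually (\<lambda>\<zeta>. 0 < \<zeta> \<and> \<zeta> < 1) (at_right (0::real))"
    unfolding eventually_at_right_field by (intro exI[of _ 1]) auto
  then show "eventually (\<lambda>\<zeta>. 0 \<le> Upsilon \<kappa> \<zeta>) (at_right 0)"
    by eventually_elim (use Upsilon_bounds(1) \<open>1 \<le> \<kappa>\<close> in blast)
  from small show "eventually (\<lambda>\<zeta>. Upsilon \<kappa> \<zeta> \<le> sqrt (ln (2 * \<kappa>) / ln (1 / \<zeta>))) (at_right 0)"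
    by eventually_elim (use Upsilon_bounds(2) \<open>1 \<le> \<kappa>\<close> in blast)
  show "((\<lambda>_. 0) \<longlongrightarrow> 0) (at_right 0)" by simp
  show "((\<lambda>\<zeta>. sqrt (ln (2 * \<kappa>) / ln (1 / \<zeta>))) \<longlongrightarrow> 0) (at_right 0)"
    using assms by (intro tendsto_sqrt_div_ln_inverse_at_right_0) simp
qed

end
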